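(* Let $(r_1,s_1),(r_2,s_2)$ be pairs of integers with $(r_1,s_1)\not\equiv(0,0)$, $(r_2,s_2)\not\equiv(0,0)$ and $(r_1,s_1)\not\equiv\pm(r_2,s_2)\bmod N$, and put $W(\tau;r_1,s_1,r_2,s_2)=\dfrac{E(\tau;r_1,s_1)-E(\tau;r_2,s_2)}{E(\tau;r_1,-s_1)-E(\tau;r_2,-s_2)}$. Assume $\{r_2\}\ge\{r_1\}$. Then the leading coefficient $c$ of the $q$-expansion of $W(\tau;r_1,s_1,r_2,s_2)$ is $c=-\zeta^{\mu(r_1)s_1+\mu(r_2)s_2}$ if $\{r_2\}=\{r_1\}\notin\{0,N/2\}$; $c=\zeta^{2\mu(r_1)s_1}$ if $\{r_2\}>\{r_1\}\neq0$; and $c=1$ otherwise.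
   Context: Fix an integer $N>2$, $\zeta=e^{2\pi i/N}$, $q=e^{2\pi i\tau/N}$. For an integer $x$, $\{x\}$ is the integer with $0\le\{x\}\le N/2$ and $x\equiv\pm\{x\}\bmod N$; $\mu(x)=1$ if $x\equiv 0$ or $N/2\bmod N$, and otherwise $\mu(x)\in\{\pm1\}$ is defined by $x\equiv\mu(x)\{x\}\bmod N$. For integers $(r,s)\not\equiv(0,0)\bmod N$, $E(\tau;r,s)=(2\pi i)^{-2}\wp((r\tau+s)/N;L_\tau)-1/12$, where $\wp(\cdot;L_\tau)$ is the Weierstrass $\wp$-function of the lattice $L_\tau=\mathbb Z+\mathbb Z\tau$, $\tau\in\mathbb H$. *)

theory Defs
  imports "HOL-Analysis.Analysis"
begin

definition wp :: "complex \<Rightarrow> complex \<Rightarrow> complex" where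
  "wp tau z = 1 / z\<^sup>2 +
     (\<Sum>\<^sub>\<infinity>(m, n) \<in> (UNIV :: (int \<times> int) set) - {(0, 0)}.
        1 / (z - (of_int m + of_int n * tau))\<^sup>2 - 1 / (of_int m + of_int n * tau)\<^sup>2)"

definition Efun :: "int \<Rightarrow> complex \<Rightarrow> int \<Rightarrow> int \<Rightarrow> complex" where
  "Efun N tau r s = wp tau ((of_int r * tau + of_int s) / of_int N) / (2 * pi * \<i>)\<^sup>2 - 1 / 12"

definition Wfun :: "int \<Rightarrow> complex \<Rightarrow> int \<Rightarrow> int \<Rightarrow> int \<Rightarrow> int \<Rightarrow> complex" where
  "Wfun N tau r1 s1 r2 s2 =
     (Efun N tau r1 s1 - Efun N tau r2 s2) / (Efun N tau r1 (- s1) - Efun N tau r2 (- s2))"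

definition zeta :: "int \<Rightarrow> complex" where
  "zeta N = exp (2 * pi * \<i> / of_int N)"

definition qpar :: "int \<Rightarrow> complex \<Rightarrow> complex" where
  "qpar N tau = exp (2 * pi * \<i> * tau / of_int N)"

text \<open>{x}: the integer in [0, N/2] with x = +-{x} mod N.\<close>
definition brace :: "int \<Rightarrow> int \<Rightarrow> int" where
  "brace N x = (if 2 * (x mod N) \<le> N then x mod N else N - x mod N)"

definition mu :: "int \<Rightarrow> int \<Rightarrow> int" where
  "mu N x = (if x mod N = 0 \<or> 2 * (x mod N) = N then 1
             else if 2 * (x mod N) < N then 1 else -1)"

text \<open>c is the leading coefficient of the q-expansion of f: f(tau) / q^k tends
  to c as Im tau tends to infinity, for some integer k.\<close>
definition leading_coeff_q :: "int \<Rightarrow> (complex \<Rightarrow> complex) \<Rightarrow> complex \<Rightarrow> bool" where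
  "leading_coeff_q N f c \<longleftrightarrow> c \<noteq> 0 \<and>
     (\<exists>k::int. ((\<lambda>tau. f tau / qpar N tau powi k) \<longlongrightarrow> c) (filtercomap Im at_top))"

end

theory Submission
  imports Defs
begin

text \<open>Summing the lattice series of \<open>\<wp>\<close> first along the rows \<open>n\<tau> + \<int>\<close> and using the partial
  fraction expansion \<open>\<Sum>\<^sub>m (w - m)^-2 = \<pi>^2 / sin^2 (\<pi> w) = (2\<pi>i)^2 G(e^(2\<pi>iw))\<close> with
  \<open>G(x) = x / (1 - x)^2\<close> turns \<open>E(\<tau>; r\<^sub>1, s\<^sub>1) - E(\<tau>; r\<^sub>2, s\<^sub>2)\<close> into
  \<open>\<Sum>\<^sub>n G(\<zeta>^s\<^sub>1 q^(r\<^sub>1 - Nn)) - G(\<zeta>^s\<^sub>2 q^(r\<^sub>2 - Nn))\<close>. Since \<open>G(1/x) = G(x)\<close>, the series for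
  \<open>(r, s)\<close> is a power series in \<open>q\<close> whose lowest terms are \<open>\<zeta>^s q^(r mod N)\<close>,
  \<open>\<zeta>^-s q^(N - r mod N)\<close> and, when \<open>N\<close> divides \<open>r\<close>, the constant \<open>G(\<zeta>^s)\<close>; so it has order at
  least \<open>{r}\<close>. Dividing numerator and denominator of \<open>W\<close> by \<open>q^{r\<^sub>1}\<close>, both tend to their
  coefficients of \<open>q^{r\<^sub>1}\<close> as \<open>Im \<tau> \<rightarrow> \<infinity>\<close>, and a case analysis on \<open>{r\<^sub>1}\<close> and \<open>{r\<^sub>2}\<close>
  evaluates their quotient. The hypotheses \<open>(r\<^sub>1, s\<^sub>1) \<noteq> \<plusminus>(r\<^sub>2, s\<^sub>2) mod N\<close> are what keep the
  coefficient of the denominator nonzero.\<close>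

section \<open>Partial fractions for \<open>\<pi>\<^sup>2 / sin\<^sup>2\<close>\<close>

lemma Digamma_reflection:
  fixes z :: complex
  assumes "z \<notin> \<int>"
  shows "Digamma z - Digamma (1 - z) = - of_real pi * cos (of_real pi * z) / sin (of_real pi * z)"
proof -
  have z: "z \<notin> \<int>\<^sub>\<le>\<^sub>0" "1 - z \<notin> \<int>\<^sub>\<le>\<^sub>0"
    using assms Ints_diff[of 1 "1 - z"] by (auto intro: not_in_Ints_imp_not_in_nonpos_Ints)
  have sin: "sin (of_real pi * z) \<noteq> 0"
    using assms by (auto simp: sin_eq_0)
  have "((\<lambda>z. Gamma z * Gamma (1 - z)) has_field_derivative
          Gamma z * Gamma (1 - z) * (Digamma z - Digamma (1 - z))) (at z)"
    using z by (auto intro!: derivative_eq_intros simp: algebra_simps)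
  moreover have "((\<lambda>z. Gamma z * Gamma (1 - z)) has_field_derivative
          - (of_real pi * (cos (of_real pi * z) * of_real pi)) / sin (of_real pi * z) ^ 2) (at z)"
    unfolding Gamma_reflection_complex
    using sin by (auto intro!: derivative_eq_intros simp: power2_eq_square)
  ultimately have "Gamma z * Gamma (1 - z) * (Digamma z - Digamma (1 - z))
      = - (of_real pi * (cos (of_real pi * z) * of_real pi)) / sin (of_real pi * z) ^ 2"
    by (rule DERIV_unique)
  also have "\<dots> = of_real pi / sin (of_real pi * z) * (- of_real pi * cos (of_real pi * z) / sin (of_real pi * z))"
    by (simp add: power2_eq_square)
  finally have "of_real pi / sin (of_real pi * z) * (Digamma z - Digamma (1 - z))
      = of_real pi / sin (of_real pi * z) * (- of_real pi * cos (of_real pi * z) / sin (of_real pi * z))"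
    by (simp only: Gamma_reflection_complex)
  then show ?thesis
    using sin by (subst (asm) mult_left_cancel) auto
qed

lemma Polygamma_1_reflection:
  fixes z :: complex
  assumes "z \<notin> \<int>"
  shows "Polygamma 1 z + Polygamma 1 (1 - z) = of_real pi ^ 2 / sin (of_real pi * z) ^ 2"
proof -
  have z: "z \<notin> \<int>\<^sub>\<le>\<^sub>0" "1 - z \<notin> \<int>\<^sub>\<le>\<^sub>0"
    using assms Ints_diff[of 1 "1 - z"] by (auto intro: not_in_Ints_imp_not_in_nonpos_Ints)
  have sin: "sin (of_real pi * z) \<noteq> 0"
    using assms by (auto simp: sin_eq_0)
  have "eventually (\<lambda>x. x \<in> - \<int>) (nhds z)"
    using assms by (intro eventually_nhds_in_open) (auto simp: open_Compl)
  then have ev: "eventually (\<lambda>x. Digamma x - Digamma (1 - x) =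
      - of_real pi * cos (of_real pi * x) / sin (of_real pi * x)) (nhds z)"
    by eventually_elim (simp add: Digamma_reflection)
  have "((\<lambda>x. Digamma x - Digamma (1 - x)) has_field_derivative
          Polygamma 1 z + Polygamma 1 (1 - z)) (at z)"
    using z by (auto intro!: derivative_eq_intros)
  then have "((\<lambda>x. - of_real pi * cos (of_real pi * x) / sin (of_real pi * x)) has_field_derivative
          Polygamma 1 z + Polygamma 1 (1 - z)) (at z)"
    by (subst (asm) DERIV_cong_ev[OF refl ev refl])
  moreover have "((\<lambda>x. - of_real pi * cos (of_real pi * x) / sin (of_real pi * x)) has_field_derivative
          of_real pi ^ 2 / sin (of_real pi * z) ^ 2) (at z)"
    using sin by (auto intro!: derivative_eq_intros simp: field_simps power2_eq_square)
      (use sin_cos_squared_add[of "z * of_real pi"] in algebra)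
  ultimately show ?thesis
    by (rule DERIV_unique)
qed

lemma has_sum_int_from_nat:
  fixes f :: "int \<Rightarrow> 'a::topological_comm_monoid_add"
  assumes "((\<lambda>k. f (- int k)) has_sum a) UNIV" and "((\<lambda>k. f (int k + 1)) has_sum b) UNIV"
  shows "(f has_sum (a + b)) UNIV"
proof -
  have "bij_betw (\<lambda>k::nat. - int k) UNIV {..0}"
    by (rule bij_betw_byWitness[where f'="\<lambda>m. nat (- m)"]) auto
  then have "(f has_sum a) {..0}"
    using assms(1) has_sum_reindex_bij_betw by blast
  moreover have "bij_betw (\<lambda>k::nat. int k + 1) UNIV {0<..}"
    by (rule bij_betw_byWitness[where f'="\<lambda>m. nat (m - 1)"]) auto
  then have "(f has_sum b) {0<..}"
    using assms(2) has_sum_reindex_bij_betw by blast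
  ultimately have "(f has_sum (a + b)) ({..0} \<union> {0<..})"
    by (rule has_sum_Un_disjoint) auto
  also have "{..0} \<union> {0<..} = (UNIV :: int set)"
    by auto
  finally show ?thesis .
qed

lemma has_sum_diff:
  fixes f g :: "'a \<Rightarrow> 'b::{topological_comm_monoid_add, topological_semigroup_mult, ring_1}"
  assumes "(f has_sum a) A" and "(g has_sum b) A"
  shows "((\<lambda>x. f x - g x) has_sum (a - b)) A"
  using has_sum_add[OF assms(1) has_sum_uminusI[OF assms(2)]] by simp

lemma summable_norm_inverse_square_shift:
  fixes w :: complex
  shows "summable (\<lambda>k. norm (inverse ((w + of_nat k) ^ 2)))"
proof (rule summable_comparison_test_ev)
  show "summable (\<lambda>k. 4 * inverse (real k ^ 2))"
    by (intro summable_mult inverse_power_summable) simp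
  have "eventually (\<lambda>k. real k \<ge> 2 * norm w + 1) sequentially"
    using eventually_ge_at_top[of "nat \<lceil>2 * norm w + 1\<rceil>"] by eventually_elim linarith
  then show "eventually (\<lambda>k. norm (norm (inverse ((w + of_nat k) ^ 2))) \<le> 4 * inverse (real k ^ 2))
      sequentially"
  proof eventually_elim
    case (elim k)
    have "norm (w + of_nat k) \<ge> real k - norm w"
      using norm_triangle_ineq2[of "of_nat k" "- w"] by (simp add: add.commute)
    then have "norm (w + of_nat k) \<ge> real k / 2"
      using elim by linarith
    moreover have "real k > 0"
      using elim norm_ge_zero[of w] by linarith
    ultimately have "inverse (norm (w + of_nat k) ^ 2) \<le> inverse ((real k / 2) ^ 2)"
      by (intro le_imp_inverse_le power_mono) auto
    then show ?case
      by (simp add: norm_divide norm_power field_simps)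
  qed
qed

lemma has_sum_Polygamma_1:
  fixes w :: complex
  assumes "w \<noteq> 0"
  shows "((\<lambda>k. inverse ((w + of_nat k) ^ 2)) has_sum Polygamma 1 w) UNIV"
proof -
  have "(\<lambda>k. inverse ((w + of_nat k) ^ Suc 1)) sums ((-1) ^ Suc 1 * Polygamma 1 w / fact 1)"
    by (rule Polygamma_LIMSEQ) (use assms in auto)
  then have "(\<lambda>k. inverse ((w + of_nat k) ^ 2)) sums Polygamma 1 w"
    by (simp add: power2_eq_square)
  then show ?thesis
    by (intro norm_summable_imp_has_sum summable_norm_inverse_square_shift)
qed

lemma has_sum_inverse_square_int_shift:
  fixes w :: complex
  assumes "w \<notin> \<int>"
  shows "((\<lambda>m::int. 1 / (w - of_int m) ^ 2) has_sum of_real pi ^ 2 / sin (of_real pi * w) ^ 2) UNIV"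
proof -
  have "w \<noteq> 0" "1 - w \<noteq> 0"
    using assms by auto
  moreover have "(w - of_int (int k + 1)) ^ 2 = ((1 - w) + of_nat k) ^ 2" for k
    by (simp add: power2_eq_square algebra_simps)
  ultimately have "((\<lambda>k. 1 / (w - of_int (- int k)) ^ 2) has_sum Polygamma 1 w) UNIV"
    and "((\<lambda>k. 1 / (w - of_int (int k + 1)) ^ 2) has_sum Polygamma 1 (1 - w)) UNIV"
    using has_sum_Polygamma_1 by (simp_all add: divide_inverse)
  from has_sum_int_from_nat[OF this] show ?thesis
    using Polygamma_1_reflection[OF assms] by simp
qed

section \<open>Convergence of the lattice sum\<close>

lemma abs_plus_abs_le_max:
  fixes x y a b :: real
  assumes "b > 0"
  defines "K \<equiv> \<bar>a\<bar> + 1"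
  shows "min (1/3) (b / (2 * K + 1)) * (\<bar>x\<bar> + \<bar>y\<bar>) \<le> max \<bar>x + y * a\<bar> (\<bar>y\<bar> * b)"
proof -
  define c where "c = min (1/3) (b / (2 * K + 1))"
  have K: "K \<ge> 1"
    by (simp add: K_def)
  have "c \<ge> 0"
    using assms K by (simp add: c_def)
  moreover have "c \<le> 1/3" "c \<le> b / (2 * K + 1)"
    unfolding c_def by (rule min.cobounded1 min.cobounded2)+
  ultimately have c: "c \<ge> 0" "c \<le> 1/3" "c \<le> b / (2 * K + 1)"
    by blast+
  show ?thesis
    unfolding c_def[symmetric]
  proof (cases "\<bar>x\<bar> \<ge> 2 * K * \<bar>y\<bar>")
    case True
    have "\<bar>y\<bar> * \<bar>a\<bar> \<le> \<bar>y\<bar> * K"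
      by (intro mult_left_mono) (auto simp: K_def)
    moreover have "\<bar>x + y * a\<bar> \<ge> \<bar>x\<bar> - \<bar>y\<bar> * \<bar>a\<bar>"
      using abs_triangle_ineq[of "x + y * a" "- (y * a)"] by (simp add: abs_mult)
    moreover have "\<bar>y\<bar> \<le> \<bar>y\<bar> * K"
      using K by (simp add: mult_le_cancel_left1)
    ultimately have "\<bar>x + y * a\<bar> \<ge> \<bar>x\<bar> / 2" "\<bar>y\<bar> \<le> \<bar>x\<bar> / 2"
      using True by (simp_all add: algebra_simps)
    moreover have "c * (\<bar>x\<bar> + \<bar>y\<bar>) \<le> (1/3) * (3/2 * \<bar>x\<bar>)"
      using c \<open>\<bar>y\<bar> \<le> \<bar>x\<bar> / 2\<close> by (intro mult_mono) auto
    ultimately show "c * (\<bar>x\<bar> + \<bar>y\<bar>) \<le> max \<bar>x + y * a\<bar> (\<bar>y\<bar> * b)"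
      by (simp add: le_max_iff_disj)
  next
    case False
    then have "\<bar>x\<bar> + \<bar>y\<bar> \<le> (2 * K + 1) * \<bar>y\<bar>"
      by (simp add: algebra_simps)
    then have "c * (\<bar>x\<bar> + \<bar>y\<bar>) \<le> (b / (2 * K + 1)) * ((2 * K + 1) * \<bar>y\<bar>)"
      using c by (intro mult_mono) auto
    also have "\<dots> = \<bar>y\<bar> * b"
      using K by (simp add: field_simps)
    finally show "c * (\<bar>x\<bar> + \<bar>y\<bar>) \<le> max \<bar>x + y * a\<bar> (\<bar>y\<bar> * b)"
      by simp
  qed
qed

lemma lattice_norm_lower_bound:
  fixes \<tau> :: complex
  assumes "Im \<tau> > 0"
  obtains c where "c > 0"
    and "\<And>m n::int. norm (of_int m + of_int n * \<tau>) \<ge> c * (\<bar>real_of_int m\<bar> + \<bar>real_of_int n\<bar>)"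
proof
  show "min (1/3) (Im \<tau> / (2 * (\<bar>Re \<tau>\<bar> + 1) + 1)) > 0"
    using assms by simp
  fix m n :: int
  have "norm (of_int m + of_int n * \<tau>) \<ge> \<bar>real_of_int m + real_of_int n * Re \<tau>\<bar>"
    using abs_Re_le_cmod[of "of_int m + of_int n * \<tau>"] by simp
  moreover have "norm (of_int m + of_int n * \<tau>) \<ge> \<bar>real_of_int n\<bar> * Im \<tau>"
    using abs_Im_le_cmod[of "of_int m + of_int n * \<tau>"] assms by (simp add: abs_mult)
  ultimately show "norm (of_int m + of_int n * \<tau>)
      \<ge> min (1/3) (Im \<tau> / (2 * (\<bar>Re \<tau>\<bar> + 1) + 1)) * (\<bar>real_of_int m\<bar> + \<bar>real_of_int n\<bar>)"
    using abs_plus_abs_le_max[OF assms, where x = "real_of_int m" and y = "real_of_int n" and a = "Re \<tau>"] by linarith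
qed

lemma summable_on_int_powr:
  fixes s :: real
  assumes "s > 1"
  shows "(\<lambda>m::int. (\<bar>real_of_int m\<bar> + 1) powr (- s)) summable_on UNIV"
proof -
  have "summable (\<lambda>n. real n powr (- s))"
    using assms by (subst summable_real_powr_iff) simp
  then have Suc: "summable (\<lambda>n. real (Suc n) powr (- s))"
    by (subst summable_Suc_iff)
  then have Suc_Suc: "summable (\<lambda>n. real (Suc (Suc n)) powr (- s))"
    by (subst summable_Suc_iff)
  have "(\<lambda>n. real (Suc n) powr (- s)) summable_on UNIV"
    and "(\<lambda>n. real (Suc (Suc n)) powr (- s)) summable_on UNIV"
    using Suc Suc_Suc
    by (auto intro!: has_sum_imp_summable sums_nonneg_imp_has_sum summable_sums)
  moreover have "\<bar>real_of_int (- int k)\<bar> + 1 = real (Suc k)"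
    and "\<bar>real_of_int (int k + 1)\<bar> + 1 = real (Suc (Suc k))" for k
    by simp_all
  ultimately have "((\<lambda>k. (\<bar>real_of_int (- int k)\<bar> + 1) powr (- s)) has_sum
        infsum (\<lambda>n. real (Suc n) powr (- s)) UNIV) UNIV"
    and "((\<lambda>k. (\<bar>real_of_int (int k + 1)\<bar> + 1) powr (- s)) has_sum
        infsum (\<lambda>n. real (Suc (Suc n)) powr (- s)) UNIV) UNIV"
    by (simp_all only:) (auto intro: has_sum_infsum)
  from has_sum_int_from_nat[OF this] show ?thesis
    by (rule has_sum_imp_summable)
qed

lemma inverse_cube_sum_le:
  fixes X Y :: real
  assumes "X \<ge> 0" "Y \<ge> 0" "X + Y \<ge> 1"
  shows "1 / (X + Y) ^ 3 \<le> 4 * ((X + 1) powr (-3/2) * (Y + 1) powr (-3/2))"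
proof -
  define P where "P = (X + 1) * (Y + 1)"
  define A where "A = 3 * (X + Y) / 2"
  have P: "P > 0" and A: "A > 0"
    using assms by (simp_all add: P_def A_def)
  \<comment> \<open>AM-GM, and \<open>X + Y + 2 \<le> 3 (X + Y)\<close>\<close>
  have "P \<le> ((X + Y + 2) / 2) ^ 2"
    unfolding P_def using sum_squares_ge_zero[of "X - Y" 0] by (simp add: power2_eq_square field_simps)
  also have "\<dots> \<le> A ^ 2"
    using assms by (intro power_mono) (auto simp: A_def)
  finally have "P powr (3/2) \<le> (A ^ 2) powr (3/2)"
    using P by (intro powr_mono2) auto
  also have "(A ^ 2) powr (3/2) = A powr 3"
    using A by (simp add: powr_powr flip: powr_numeral)
  also have "\<dots> = A ^ 3"
    using A by (simp add: powr_numeral)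
  also have "\<dots> = 27/8 * (X + Y) ^ 3"
    unfolding A_def by (simp only: power_divide power_mult_distrib) simp
  finally have PA: "P powr (3/2) \<le> 27/8 * (X + Y) ^ 3" .
  have "(X + 1) powr (-3/2) * (Y + 1) powr (-3/2) = P powr (- (3/2))"
    unfolding P_def using assms by (simp add: powr_mult)
  also have "\<dots> = 1 / P powr (3/2)"
    by (rule powr_minus_divide)
  finally have eq: "(X + 1) powr (-3/2) * (Y + 1) powr (-3/2) = 1 / P powr (3/2)" .
  have "(X + Y) ^ 3 > 0"
    using assms by simp
  then have "1 / (X + Y) ^ 3 \<le> 4 / (27/8 * (X + Y) ^ 3)"
    by (simp add: field_simps)
  also have "\<dots> \<le> 4 / P powr (3/2)"
    using PA P \<open>(X + Y) ^ 3 > 0\<close> by (intro divide_left_mono) auto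
  finally show ?thesis
    using eq by simp
qed

lemma summable_on_lattice_inverse_cube:
  "(\<lambda>(m, n). 1 / (\<bar>real_of_int m\<bar> + \<bar>real_of_int n\<bar>) ^ 3) summable_on (UNIV :: (int \<times> int) set)"
proof -
  define g where "g m = (\<bar>real_of_int m\<bar> + 1) powr (-3/2)" for m :: int
  have g: "g summable_on UNIV"
    unfolding g_def using summable_on_int_powr[of "3/2"] by simp
  have "(\<lambda>(m, n). g m * g n) summable_on Sigma UNIV (\<lambda>_. UNIV)"
  proof (rule summable_on_SigmaI)
    show "((\<lambda>n. (\<lambda>(m, n). g m * g n) (m, n)) has_sum g m * infsum g UNIV) UNIV" for m
      using has_sum_cmult_right[OF has_sum_infsum[OF g], of "g m"] by simp
    show "(\<lambda>m. g m * infsum g UNIV) summable_on UNIV"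
      using g by (rule summable_on_cmult_left)
  qed (simp add: g_def case_prod_unfold)
  then have "(\<lambda>x. 4 * (\<lambda>(m, n). g m * g n) x) summable_on UNIV"
    by (intro summable_on_cmult_right) simp
  then show ?thesis
  proof (rule summable_on_comparison_test)
    fix x :: "int \<times> int"
    obtain m n where x: "x = (m, n)"
      by (cases x)
    show "0 \<le> (\<lambda>(m, n). 1 / (\<bar>real_of_int m\<bar> + \<bar>real_of_int n\<bar>) ^ 3) x"
      by (simp add: x)
    show "(\<lambda>(m, n). 1 / (\<bar>real_of_int m\<bar> + \<bar>real_of_int n\<bar>) ^ 3) x \<le> 4 * (\<lambda>(m, n). g m * g n) x"
    proof (cases "m = 0 \<and> n = 0")
      case False
      then have "\<bar>real_of_int m\<bar> + \<bar>real_of_int n\<bar> \<ge> 1"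
        by linarith
      from inverse_cube_sum_le[OF abs_ge_zero abs_ge_zero this] show ?thesis
        by (simp add: x g_def)
    qed (simp add: x g_def)
  qed
qed

lemma norm_wp_summand_le:
  fixes z w :: complex and C :: real
  assumes "2 * norm z \<le> C" and "0 < C" and "C \<le> norm w"
  shows "norm (1 / (z - w) ^ 2 - 1 / w ^ 2) \<le> 10 * norm z / C ^ 3"
proof -
  have w: "norm w > 0"
    using assms by linarith
  have zw': "norm z \<le> norm w / 2"
    using assms by simp
  have zw: "norm (z - w) \<ge> norm w / 2"
    using norm_triangle_ineq2[of w z] zw' by (simp add: norm_minus_commute)
  then have "z - w \<noteq> 0"
    using w by auto
  then have "1 / (z - w) ^ 2 - 1 / w ^ 2 = (w ^ 2 - (z - w) ^ 2) / ((z - w) ^ 2 * w ^ 2)"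
    using w by (simp add: diff_frac_eq)
  also have "w ^ 2 - (z - w) ^ 2 = z * (2 * w - z)"
    by (simp add: power2_eq_square algebra_simps)
  finally have "1 / (z - w) ^ 2 - 1 / w ^ 2 = z * (2 * w - z) / ((z - w) ^ 2 * w ^ 2)" .
  moreover have "norm (2 * w - z) \<le> 5/2 * norm w"
    using norm_triangle_ineq4[of "2 * w" z] zw' by simp
  ultimately have "norm (1 / (z - w) ^ 2 - 1 / w ^ 2)
      = norm z * norm (2 * w - z) / (norm (z - w) ^ 2 * norm w ^ 2)"
    by (simp add: norm_mult norm_divide norm_power)
  also have "\<dots> \<le> norm z * (5/2 * norm w) / ((norm w / 2) ^ 2 * norm w ^ 2)"
    using w zw \<open>norm (2 * w - z) \<le> 5/2 * norm w\<close>
    by (intro frac_le mult_left_mono mult_right_mono power_mono mult_pos_pos) auto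
  also have "\<dots> = 10 * norm z / norm w ^ 3"
    using w by (simp add: field_simps power2_eq_square power3_eq_cube)
  also have "\<dots> \<le> 10 * norm z / C ^ 3"
    using assms by (intro divide_left_mono power_mono mult_pos_pos) auto
  finally show ?thesis .
qed

lemma wp_summand_summable:
  fixes \<tau> z :: complex
  assumes "Im \<tau> > 0"
  shows "(\<lambda>(m, n). 1 / (z - (of_int m + of_int n * \<tau>)) ^ 2 - 1 / (of_int m + of_int n * \<tau>) ^ 2)
           summable_on (UNIV :: (int \<times> int) set)"
proof -
  obtain c where c: "c > 0"
    and lower: "\<And>m n::int. norm (of_int m + of_int n * \<tau>) \<ge> c * (\<bar>real_of_int m\<bar> + \<bar>real_of_int n\<bar>)"
    using lattice_norm_lower_bound[OF assms] by blast
  define f where "f = (\<lambda>(m, n). 1 / (z - (of_int m + of_int n * \<tau>)) ^ 2 - 1 / (of_int m + of_int n * \<tau>) ^ 2)"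
  define R where "R = 2 * norm z / c"
  define F where "F = {(m::int, n::int). \<bar>real_of_int m\<bar> + \<bar>real_of_int n\<bar> \<le> R}"
  define \<rho> where "\<rho> = (\<lambda>(m::int, n::int). 1 / (\<bar>real_of_int m\<bar> + \<bar>real_of_int n\<bar>) ^ 3)"
  have "F \<subseteq> {-\<lceil>R\<rceil>..\<lceil>R\<rceil>} \<times> {-\<lceil>R\<rceil>..\<lceil>R\<rceil>}"
    unfolding F_def by (auto; linarith)
  then have "f summable_on F"
    by (intro summable_on_finite) (auto intro: finite_subset)
  moreover have "(\<lambda>x. norm (f x)) summable_on (UNIV - F)"
  proof (rule summable_on_comparison_test)
    show "(\<lambda>x. 10 * norm z / c ^ 3 * \<rho> x) summable_on (UNIV - F)"
      unfolding \<rho>_def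
      by (intro summable_on_cmult_right summable_on_subset[OF summable_on_lattice_inverse_cube]) auto
  next
    fix x
    assume x: "x \<in> UNIV - F"
    obtain m n where x_eq: "x = (m, n)"
      by (cases x)
    define S where "S = \<bar>real_of_int m\<bar> + \<bar>real_of_int n\<bar>"
    have "S > R"
      using x by (simp add: F_def x_eq S_def)
    then have "c * S > c * R"
      using c by simp
    moreover have "c * R = 2 * norm z"
      using c by (simp add: R_def)
    ultimately have "2 * norm z \<le> c * S" "0 < c * S"
      using norm_ge_zero[of z] by linarith+
    then have "norm (f x) \<le> 10 * norm z / (c * S) ^ 3"
      using norm_wp_summand_le lower[of m n] by (simp add: f_def x_eq S_def)
    then show "norm (f x) \<le> 10 * norm z / c ^ 3 * \<rho> x"
      by (simp add: \<rho>_def x_eq S_def power_mult_distrib)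
  qed simp
  then have "f summable_on (UNIV - F)"
    by (rule abs_summable_summable)
  ultimately have "f summable_on (F \<union> (UNIV - F))"
    by (rule summable_on_union)
  then show ?thesis
    by (simp add: f_def)
qed

lemma wp_has_sum:
  fixes \<tau> z :: complex
  assumes "Im \<tau> > 0"
  shows "((\<lambda>(m, n). 1 / (z - (of_int m + of_int n * \<tau>)) ^ 2 - 1 / (of_int m + of_int n * \<tau>) ^ 2)
           has_sum wp \<tau> z) (UNIV :: (int \<times> int) set)"
proof -
  define f where "f = (\<lambda>(m, n). 1 / (z - (of_int m + of_int n * \<tau>)) ^ 2 - 1 / (of_int m + of_int n * \<tau>) ^ 2)"
  have "f summable_on (UNIV - {(0, 0)})"
    using wp_summand_summable[OF assms, of z] unfolding f_def by (rule summable_on_subset) auto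
  then have "(f has_sum (f (0, 0) + infsum f (UNIV - {(0, 0)}))) (insert (0, 0) (UNIV - {(0, 0)}))"
    by (intro has_sum_insert) auto
  moreover have "f (0, 0) + infsum f (UNIV - {(0, 0)}) = wp \<tau> z"
    by (simp add: f_def wp_def)
  ultimately show ?thesis
    by (simp add: f_def insert_absorb)
qed

text \<open>The inner sums over \<open>m\<close> are partial fraction expansions of \<open>\<pi>\<^sup>2 / sin\<^sup>2\<close>.\<close>

lemma wp_diff_has_sum_rows:
  fixes \<tau> z1 z2 :: complex
  assumes "Im \<tau> > 0"
    and "\<And>n::int. z1 - of_int n * \<tau> \<notin> \<int>" and "\<And>n::int. z2 - of_int n * \<tau> \<notin> \<int>"
  shows "((\<lambda>n::int. of_real pi ^ 2 / sin (of_real pi * (z1 - of_int n * \<tau>)) ^ 2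
                  - of_real pi ^ 2 / sin (of_real pi * (z2 - of_int n * \<tau>)) ^ 2)
           has_sum (wp \<tau> z1 - wp \<tau> z2)) UNIV"
proof (rule has_sum_Sigma'[where B = "\<lambda>_. UNIV"])
  have "((\<lambda>(m, n). 1 / (z1 - (of_int m + of_int n * \<tau>)) ^ 2 - 1 / (z2 - (of_int m + of_int n * \<tau>)) ^ 2)
      has_sum (wp \<tau> z1 - wp \<tau> z2)) (UNIV \<times> UNIV :: (int \<times> int) set)"
    using has_sum_diff[OF wp_has_sum[OF assms(1), of z1] wp_has_sum[OF assms(1), of z2]]
    by (simp add: case_prod_unfold)
  from iffD1[OF has_sum_swap this]
  show "((\<lambda>(n, m). 1 / (z1 - (of_int m + of_int n * \<tau>)) ^ 2 - 1 / (z2 - (of_int m + of_int n * \<tau>)) ^ 2)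
      has_sum (wp \<tau> z1 - wp \<tau> z2)) (Sigma UNIV (\<lambda>_. UNIV :: int set))"
    by (simp add: case_prod_unfold)
next
  fix n :: int
  have shift: "z - (of_int m + of_int n * \<tau>) = (z - of_int n * \<tau>) - of_int m" for z :: complex and m :: int
    by simp
  show "((\<lambda>m. (\<lambda>(n, m). 1 / (z1 - (of_int m + of_int n * \<tau>)) ^ 2
        - 1 / (z2 - (of_int m + of_int n * \<tau>)) ^ 2) (n, m))
      has_sum (of_real pi ^ 2 / sin (of_real pi * (z1 - of_int n * \<tau>)) ^ 2
        - of_real pi ^ 2 / sin (of_real pi * (z2 - of_int n * \<tau>)) ^ 2)) UNIV"
    using has_sum_diff[OF has_sum_inverse_square_int_shift[OF assms(2)]
        has_sum_inverse_square_int_shift[OF assms(3)]]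
    unfolding shift case_prod_conv .
qed

section \<open>The \<open>q\<close>-expansion of \<open>E\<close>\<close>

text \<open>\<open>Gfun x = (\<Sum>k\<ge>1. k x\<^sup>k)\<close> for \<open>\<bar>x\<bar> < 1\<close>.\<close>

definition Gfun :: "complex \<Rightarrow> complex" where
  "Gfun x = x / (1 - x) ^ 2"

lemma pi_sq_over_sin_sq:
  fixes w :: complex
  assumes "sin (of_real pi * w) \<noteq> 0"
  shows "of_real pi ^ 2 / sin (of_real pi * w) ^ 2 = (2 * of_real pi * \<i>) ^ 2 * Gfun (exp (2 * of_real pi * \<i> * w))"
proof -
  define u where "u = exp (\<i> * of_real pi * w)"
  have u: "u \<noteq> 0"
    by (simp add: u_def)
  have sin: "sin (of_real pi * w) = (u - inverse u) / (2 * \<i>)"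
    by (simp add: sin_exp_eq u_def exp_minus mult.assoc)
  have exp: "exp (2 * of_real pi * \<i> * w) = u ^ 2"
    by (simp add: u_def power2_eq_square exp_add[symmetric] algebra_simps)
  have "u - inverse u \<noteq> 0"
    using assms sin by auto
  then have "1 - u ^ 2 \<noteq> 0"
    using u by (auto simp: field_simps power2_eq_square)
  with u \<open>u - inverse u \<noteq> 0\<close>
  have "of_real pi ^ 2 / ((u - inverse u) / (2 * \<i>)) ^ 2 = (2 * of_real pi * \<i>) ^ 2 * (u ^ 2 / (1 - u ^ 2) ^ 2)"
    by (simp add: field_simps power2_eq_square)
  then show ?thesis
    by (simp add: sin exp Gfun_def)
qed

lemma zeta_nonzero [simp]: "zeta N \<noteq> 0"
  by (simp add: zeta_def)

lemma qpar_nonzero [simp]: "qpar N \<tau> \<noteq> 0"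
  by (simp add: qpar_def)

lemma norm_zeta_powi [simp]: "norm (zeta N powi x) = 1"
  by (simp add: zeta_def norm_exp_eq_Re norm_power_int)

lemma zeta_powi_eq_exp: "zeta N powi x = exp (of_int x * (2 * of_real pi * \<i> / of_int N))"
  by (simp add: zeta_def exp_power_int)

lemma qpar_powi_eq_exp: "qpar N \<tau> powi x = exp (of_int x * (2 * of_real pi * \<i> * \<tau> / of_int N))"
  by (simp add: qpar_def exp_power_int)

lemma exp_division_point_minus_lattice:
  fixes N r s n :: int
  assumes "N \<noteq> 0"
  shows "exp (2 * of_real pi * \<i> * ((of_int r * \<tau> + of_int s) / of_int N - of_int n * \<tau>))
         = zeta N powi s * qpar N \<tau> powi (r - N * n)"
proof -
  have "2 * of_real pi * \<i> * ((of_int r * \<tau> + of_int s) / of_int N - of_int n * \<tau>)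
        = of_int s * (2 * of_real pi * \<i> / of_int N) + of_int (r - N * n) * (2 * of_real pi * \<i> * \<tau> / of_int N)"
    using assms by (simp add: field_simps)
  then show ?thesis
    by (simp add: zeta_powi_eq_exp qpar_powi_eq_exp exp_add)
qed

lemma division_point_minus_lattice_notin_Ints:
  fixes N r s n :: int and \<tau> :: complex
  assumes "N > 0" and "\<not> (N dvd r \<and> N dvd s)" and "Im \<tau> > 0"
  shows "(of_int r * \<tau> + of_int s) / of_int N - of_int n * \<tau> \<notin> \<int>"
proof
  assume "(of_int r * \<tau> + of_int s) / of_int N - of_int n * \<tau> \<in> \<int>"
  then obtain k where "(of_int r * \<tau> + of_int s) / of_int N - of_int n * \<tau> = of_int k"
    by (auto elim!: Ints_cases)
  then have k: "of_int (r - N * n) * \<tau> + of_int s = of_int (N * k)"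
    using assms(1) by (simp add: field_simps)
  have "Im (of_int (r - N * n) * \<tau> + of_int s) = real_of_int (r - N * n) * Im \<tau>"
    by simp
  with k have "real_of_int (r - N * n) * Im \<tau> = 0"
    by simp
  then have "real_of_int (r - N * n) = 0"
    using assms(3) by simp
  then have "r = N * n"
    by (simp only: of_int_eq_0_iff)
  with k have "s = N * k"
    by (simp flip: of_int_mult)
  with \<open>r = N * n\<close> assms(2) show False
    by auto
qed

lemma Efun_diff_has_sum:
  fixes N r1 s1 r2 s2 :: int and \<tau> :: complex
  assumes "N > 0" and "\<not> (N dvd r1 \<and> N dvd s1)" and "\<not> (N dvd r2 \<and> N dvd s2)" and "Im \<tau> > 0"
  shows "((\<lambda>n::int. Gfun (zeta N powi s1 * qpar N \<tau> powi (r1 - N * n))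
                 - Gfun (zeta N powi s2 * qpar N \<tau> powi (r2 - N * n)))
          has_sum (Efun N \<tau> r1 s1 - Efun N \<tau> r2 s2)) UNIV"
proof -
  define z1 where "z1 = (of_int r1 * \<tau> + of_int s1) / of_int N"
  define z2 where "z2 = (of_int r2 * \<tau> + of_int s2) / of_int N"
  have z1: "z1 - of_int n * \<tau> \<notin> \<int>" and z2: "z2 - of_int n * \<tau> \<notin> \<int>" for n :: int
    unfolding z1_def z2_def using assms by (simp_all add: division_point_minus_lattice_notin_Ints)
  have sin: "sin (of_real pi * w) \<noteq> 0" if "w \<notin> \<int>" for w :: complex
    using that by (auto simp: sin_eq_0)
  define c where "c = 1 / (2 * of_real pi * \<i>) ^ 2"
  have "((\<lambda>n::int. c * (of_real pi ^ 2 / sin (of_real pi * (z1 - of_int n * \<tau>)) ^ 2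
                  - of_real pi ^ 2 / sin (of_real pi * (z2 - of_int n * \<tau>)) ^ 2))
           has_sum (c * (wp \<tau> z1 - wp \<tau> z2))) UNIV"
    by (intro has_sum_cmult_right wp_diff_has_sum_rows assms z1 z2)
  moreover have "c * (of_real pi ^ 2 / sin (of_real pi * (z1 - of_int n * \<tau>)) ^ 2
                  - of_real pi ^ 2 / sin (of_real pi * (z2 - of_int n * \<tau>)) ^ 2)
      = Gfun (zeta N powi s1 * qpar N \<tau> powi (r1 - N * n)) - Gfun (zeta N powi s2 * qpar N \<tau> powi (r2 - N * n))"
    for n :: int
    using assms(1)
    by (simp only: pi_sq_over_sin_sq[OF sin[OF z1]] pi_sq_over_sin_sq[OF sin[OF z2]])
      (simp add: z1_def z2_def exp_division_point_minus_lattice c_def flip: right_diff_distrib)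
  moreover have "c * (wp \<tau> z1 - wp \<tau> z2) = Efun N \<tau> r1 s1 - Efun N \<tau> r2 s2"
    by (simp add: Efun_def z1_def z2_def c_def diff_divide_distrib)
  ultimately show ?thesis
    by simp
qed

lemma Gfun_inverse: "Gfun (inverse y) = Gfun y"
proof (cases "y = 0 \<or> y = 1")
  case False
  then have "y \<noteq> 0" "1 - y \<noteq> 0"
    by auto
  then show ?thesis
    by (simp add: Gfun_def field_simps power2_eq_square)
qed (auto simp: Gfun_def)

lemma norm_Gfun_le:
  assumes "norm y \<le> 1/2"
  shows "norm (Gfun y) \<le> 4 * norm y"
proof -
  have "norm (1 - y) \<ge> 1 - norm y"
    using norm_triangle_ineq2[of 1 y] by simp
  then have "norm (1 - y) \<ge> 1/2"
    using assms by linarith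
  then have "norm y / norm (1 - y) ^ 2 \<le> norm y / (1/2) ^ 2"
    by (intro divide_left_mono power_mono mult_pos_pos) auto
  also have "\<dots> = 4 * norm y"
    by (simp add: power2_eq_square)
  finally show ?thesis
    by (simp add: Gfun_def norm_divide norm_power)
qed

lemma norm_Gfun_monomial_le:
  fixes d q :: complex
  assumes "norm d = 1" and "norm q \<le> 1/2" and "e > 0"
  shows "norm (Gfun (d * q ^ e)) \<le> 4 * norm q ^ e"
proof -
  have "norm q ^ e \<le> norm q ^ 1"
    using assms by (intro power_decreasing) auto
  with assms show ?thesis
    using norm_Gfun_le[of "d * q ^ e"] by (simp add: norm_mult norm_power)
qed

lemma summable_norm_Gfun_series:
  fixes d q :: complex and K e :: nat
  assumes "norm d = 1" and "norm q \<le> 1/2" and "K > 0"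
  shows "summable (\<lambda>k. norm (Gfun (d * q ^ (e + K * k))))"
proof (rule summable_comparison_test_ev)
  show "summable (\<lambda>k. 4 * (1/2 :: real) ^ k)"
    by (intro summable_mult summable_geometric) auto
  show "eventually (\<lambda>k. norm (norm (Gfun (d * q ^ (e + K * k)))) \<le> 4 * (1/2) ^ k) sequentially"
    using eventually_ge_at_top[of "1::nat"]
  proof eventually_elim
    case (elim k)
    have "k \<le> e + K * k"
      using assms(3) by (simp add: trans_le_add2)
    then have "norm (Gfun (d * q ^ (e + K * k))) \<le> 4 * norm q ^ (e + K * k)"
      using elim by (intro norm_Gfun_monomial_le assms) auto
    also have "norm q ^ (e + K * k) \<le> (1/2) ^ (e + K * k)"
      using assms by (intro power_mono) auto
    also have "(1/2 :: real) ^ (e + K * k) \<le> (1/2) ^ k"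
      using \<open>k \<le> e + K * k\<close> by (intro power_decreasing) auto
    finally show ?case
      by simp
  qed
qed

text \<open>The two halves of \<open>\<Sum>\<^sub>n Gfun (c q^(r - K n))\<close>: the terms with \<open>r - K n \<ge> 0\<close> and,
  through \<open>Gfun (1/x) = Gfun x\<close>, the terms with \<open>r - K n < 0\<close>.\<close>

definition Gfun_sum :: "nat \<Rightarrow> complex \<Rightarrow> nat \<Rightarrow> complex \<Rightarrow> complex" where
  "Gfun_sum K c a q = (\<Sum>k. Gfun (c * q ^ (a + K * k))) + (\<Sum>k. Gfun (inverse c * q ^ ((K - a) + K * k)))"

lemma has_sum_Gfun_series:
  fixes d q :: complex and K e :: nat
  assumes "norm d = 1" and "norm q \<le> 1/2" and "K > 0"
  shows "((\<lambda>k. Gfun (d * q ^ (e + K * k))) has_sum (\<Sum>k. Gfun (d * q ^ (e + K * k)))) UNIV"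
  using summable_norm_Gfun_series[OF assms]
  by (intro norm_summable_imp_has_sum summable_sums) (auto intro: summable_norm_cancel)

lemma has_sum_Gfun_powi:
  fixes c q :: complex and K r :: int
  assumes "norm c = 1" and "norm q \<le> 1/2" and "q \<noteq> 0" and "K > 0"
  shows "((\<lambda>n::int. Gfun (c * q powi (r - K * n))) has_sum Gfun_sum (nat K) c (nat (r mod K)) q) UNIV"
proof -
  define a where "a = nat (r mod K)"
  have a: "int a = r mod K" "a < nat K"
    using assms(4) by (simp_all add: a_def)
  have K: "nat K > 0"
    using assms(4) by simp
  define \<phi> where "\<phi> m = Gfun (c * q powi (int a - K * m))" for m :: int
  have "\<phi> (- int k) = Gfun (c * q ^ (a + nat K * k))" for k
  proof -
    have "int a - K * (- int k) = int (a + nat K * k)"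
      using assms(4) by simp
    then show ?thesis
      by (simp add: \<phi>_def power_int_of_nat del: of_nat_add)
  qed
  then have neg: "((\<lambda>k. \<phi> (- int k)) has_sum (\<Sum>k. Gfun (c * q ^ (a + nat K * k)))) UNIV"
    using has_sum_Gfun_series[OF assms(1,2) K] by simp
  have "\<phi> (int k + 1) = Gfun (inverse c * q ^ ((nat K - a) + nat K * k))" for k
  proof -
    have "int a - K * (int k + 1) = - int ((nat K - a) + nat K * k)"
      using a assms(4) by (simp add: algebra_simps of_nat_diff)
    then have "\<phi> (int k + 1) = Gfun (inverse (inverse c * q ^ ((nat K - a) + nat K * k)))"
      using assms(3) by (simp add: \<phi>_def power_int_minus power_int_of_nat del: of_nat_add)
    then show ?thesis
      by (simp only: Gfun_inverse)
  qed
  then have pos: "((\<lambda>k. \<phi> (int k + 1)) has_sum (\<Sum>k. Gfun (inverse c * q ^ ((nat K - a) + nat K * k)))) UNIV"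
    using has_sum_Gfun_series[of "inverse c", OF _ assms(2) K] assms(1) by (simp add: norm_inverse)
  have "(\<phi> has_sum Gfun_sum (nat K) c a q) UNIV"
    unfolding Gfun_sum_def by (rule has_sum_int_from_nat[OF neg pos])
  moreover have "bij_betw (\<lambda>m. m - r div K) UNIV (UNIV :: int set)"
    by (rule bij_betw_byWitness[where f'="\<lambda>m. m + r div K"]) auto
  ultimately have "((\<lambda>n. \<phi> (n - r div K)) has_sum Gfun_sum (nat K) c a q) UNIV"
    using has_sum_reindex_bij_betw by blast
  moreover have "int a - K * (n - r div K) = r - K * n" for n
    using a(1) div_mult_mod_eq[of r K] by (simp add: algebra_simps)
  ultimately show ?thesis
    by (simp add: \<phi>_def a_def)
qed

lemma Efun_diff_eq_Gfun_sum:
  fixes N r1 s1 r2 s2 :: int and \<tau> :: complex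
  assumes "N > 0" and "\<not> (N dvd r1 \<and> N dvd s1)" and "\<not> (N dvd r2 \<and> N dvd s2)"
    and "Im \<tau> > 0" and "norm (qpar N \<tau>) \<le> 1/2"
  shows "Efun N \<tau> r1 s1 - Efun N \<tau> r2 s2 =
         Gfun_sum (nat N) (zeta N powi s1) (nat (r1 mod N)) (qpar N \<tau>) -
         Gfun_sum (nat N) (zeta N powi s2) (nat (r2 mod N)) (qpar N \<tau>)"
proof -
  have row: "((\<lambda>n::int. Gfun (zeta N powi s * qpar N \<tau> powi (r - N * n))) has_sum
      Gfun_sum (nat N) (zeta N powi s) (nat (r mod N)) (qpar N \<tau>)) UNIV" for r s
    by (rule has_sum_Gfun_powi) (use assms(1,5) in simp_all)
  have "((\<lambda>n::int. Gfun (zeta N powi s1 * qpar N \<tau> powi (r1 - N * n))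
      - Gfun (zeta N powi s2 * qpar N \<tau> powi (r2 - N * n))) has_sum
      Gfun_sum (nat N) (zeta N powi s1) (nat (r1 mod N)) (qpar N \<tau>)
      - Gfun_sum (nat N) (zeta N powi s2) (nat (r2 mod N)) (qpar N \<tau>)) UNIV"
    using row[of s1 r1] row[of s2 r2] by (rule has_sum_diff)
  with Efun_diff_has_sum[OF assms(1-4)] show ?thesis
    by (rule has_sum_unique)
qed

section \<open>Asymptotics as \<open>Im \<tau> \<rightarrow> \<infinity>\<close>\<close>

lemma eventually_small_at_0: "eventually (\<lambda>q::complex. q \<noteq> 0 \<and> norm q \<le> 1/2) (at 0)"
  unfolding eventually_at by (rule exI[of _ "1/2"]) (auto simp: dist_norm)

lemma tendsto_0_at_0_if_linear_bound:
  fixes f :: "complex \<Rightarrow> complex"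
  assumes "eventually (\<lambda>q. norm (f q) \<le> C * norm q) (at 0)"
  shows "(f \<longlongrightarrow> 0) (at 0)"
proof (rule Lim_null_comparison[OF assms])
  have "((\<lambda>q::complex. C * norm q) \<longlongrightarrow> C * norm (0::complex)) (at 0)"
    by (intro tendsto_intros)
  then show "((\<lambda>q::complex. C * norm q) \<longlongrightarrow> 0) (at 0)"
    by simp
qed

lemma Gfun_monomial_asymptotics:
  fixes d :: complex and e m :: nat
  assumes "norm d = 1" and "m \<le> e"
  shows "((\<lambda>q. Gfun (d * q ^ e) / q ^ m) \<longlongrightarrow> (if e \<noteq> m then 0 else if m = 0 then Gfun d else d)) (at 0)"
proof (cases "e = m")
  case True
  show ?thesis
  proof (cases "m = 0")
    case False
    have "eventually (\<lambda>q. d / (1 - d * q ^ m) ^ 2 = Gfun (d * q ^ e) / q ^ m) (at 0)"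
      using eventually_small_at_0 by eventually_elim (simp add: Gfun_def True field_simps)
    moreover have "((\<lambda>q::complex. d / (1 - d * q ^ m) ^ 2) \<longlongrightarrow> d / (1 - d * 0 ^ m) ^ 2) (at 0)"
      using False by (intro tendsto_intros) (auto simp: power_0_left)
    ultimately show ?thesis
      using True False by (simp add: tendsto_cong power_0_left)
  qed (simp add: True)
next
  case False
  have "eventually (\<lambda>q. norm (Gfun (d * q ^ e) / q ^ m) \<le> 4 * norm q) (at 0)"
    using eventually_small_at_0
  proof eventually_elim
    case (elim q)
    have "norm (Gfun (d * q ^ e) / q ^ m) \<le> 4 * norm q ^ e / norm q ^ m"
      using norm_Gfun_monomial_le[OF assms(1), of q e] elim assms(2) False
      by (simp add: norm_divide norm_power divide_right_mono)
    also have "\<dots> = 4 * norm q ^ (e - m)"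
      using elim assms(2) by (simp add: power_diff)
    also have "\<dots> \<le> 4 * norm q ^ 1"
      using elim assms(2) False by (intro mult_left_mono power_decreasing) auto
    finally show ?case
      by simp
  qed
  then show ?thesis
    using False by (simp add: tendsto_0_at_0_if_linear_bound)
qed

lemma norm_Gfun_series_tail_le:
  fixes d q :: complex and K e m :: nat
  assumes "norm d = 1" and "norm q \<le> 1/2" and "K > 0" and "m \<le> e"
  shows "norm (\<Sum>k. Gfun (d * q ^ (e + K * Suc k))) \<le> 8 * norm q ^ (m + 1)"
proof -
  have "e + K * Suc k = (e + K) + K * k" for k
    by simp
  then have summable: "summable (\<lambda>k. norm (Gfun (d * q ^ (e + K * Suc k))))"
    using summable_norm_Gfun_series[OF assms(1-3), of "e + K"] by presburger
  have geometric: "summable (\<lambda>k. 4 * norm q ^ (m + 1) * norm q ^ k)"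
    using assms(2) by (intro summable_mult summable_geometric) simp
  have "norm (Gfun (d * q ^ (e + K * Suc k))) \<le> 4 * norm q ^ (m + 1) * norm q ^ k" for k
  proof -
    have "m + 1 + k \<le> e + K * Suc k"
      using assms(3,4) mult_le_mono1[of 1 K "Suc k"] by simp
    then have "norm q ^ (e + K * Suc k) \<le> norm q ^ (m + 1 + k)"
      using assms(2) by (intro power_decreasing) auto
    moreover have "norm (Gfun (d * q ^ (e + K * Suc k))) \<le> 4 * norm q ^ (e + K * Suc k)"
      using assms(3) by (intro norm_Gfun_monomial_le assms(1,2)) simp
    ultimately show ?thesis
      by (simp add: power_add mult.assoc)
  qed
  then have "norm (\<Sum>k. Gfun (d * q ^ (e + K * Suc k))) \<le> (\<Sum>k. 4 * norm q ^ (m + 1) * norm q ^ k)"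
    using summable_norm[OF summable] suminf_le[OF _ summable geometric] by (meson order_trans)
  also have "\<dots> = 4 * norm q ^ (m + 1) * (1 / (1 - norm q))"
    using assms(2) suminf_geometric[of "norm q"] by (simp add: suminf_mult)
  also have "\<dots> \<le> 4 * norm q ^ (m + 1) * 2"
    using assms(2) by (intro mult_left_mono) (auto simp: field_simps)
  finally show ?thesis
    by simp
qed

lemma Gfun_series_asymptotics:
  fixes d :: complex and K e m :: nat
  assumes "norm d = 1" and "K > 0" and "m \<le> e"
  shows "((\<lambda>q. (\<Sum>k. Gfun (d * q ^ (e + K * k))) / q ^ m)
           \<longlongrightarrow> (if e \<noteq> m then 0 else if m = 0 then Gfun d else d)) (at 0)"
proof -
  define T where "T q = (\<Sum>k. Gfun (d * q ^ (e + K * Suc k))) / q ^ m" for q :: complex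
  have "eventually (\<lambda>q. norm (T q) \<le> 8 * norm q) (at 0)"
    using eventually_small_at_0
  proof eventually_elim
    case (elim q)
    have "norm (T q) = norm (\<Sum>k. Gfun (d * q ^ (e + K * Suc k))) / norm q ^ m"
      by (simp add: T_def norm_divide norm_power)
    also have "\<dots> \<le> 8 * norm q ^ (m + 1) / norm q ^ m"
      using norm_Gfun_series_tail_le[OF assms(1) _ assms(2,3), of q] elim by (intro divide_right_mono) auto
    also have "\<dots> = 8 * norm q"
      using elim by simp
    finally show ?case .
  qed
  then have "(T \<longlongrightarrow> 0) (at 0)"
    by (rule tendsto_0_at_0_if_linear_bound)
  then have lim: "((\<lambda>q. Gfun (d * q ^ e) / q ^ m + T q)
      \<longlongrightarrow> (if e \<noteq> m then 0 else if m = 0 then Gfun d else d) + 0) (at 0)"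
    by (intro tendsto_add Gfun_monomial_asymptotics assms)
  have "eventually (\<lambda>q. Gfun (d * q ^ e) / q ^ m + T q =
      (\<Sum>k. Gfun (d * q ^ (e + K * k))) / q ^ m) (at 0)"
    using eventually_small_at_0
  proof eventually_elim
    case (elim q)
    have "summable (\<lambda>k. Gfun (d * q ^ (e + K * k)))"
      using summable_norm_Gfun_series[OF assms(1) conjunct2[OF elim] assms(2)] by (rule summable_norm_cancel)
    from suminf_split_head[OF this] show ?case
      by (simp add: T_def flip: add_divide_distrib)
  qed
  from tendsto_cong[THEN iffD1, OF this lim] show ?thesis
    by simp
qed

text \<open>The coefficient of \<open>q\<^sup>M\<close> in \<open>Gfun_sum N c A q\<close>, when no lower power of \<open>q\<close> occurs.\<close>

definition Gfun_sum_lead :: "int \<Rightarrow> int \<Rightarrow> complex \<Rightarrow> int \<Rightarrow> complex" where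
  "Gfun_sum_lead N M c A =
     (if A = M then if M = 0 then Gfun c else c else 0) + (if N - A = M then inverse c else 0)"

lemma Gfun_sum_asymptotics:
  fixes N M A :: int and c :: complex
  assumes "norm c = 1" and "0 \<le> M" and "M \<le> A" and "M \<le> N - A" and "A < N"
  shows "((\<lambda>q. Gfun_sum (nat N) c (nat A) q / q ^ nat M) \<longlongrightarrow> Gfun_sum_lead N M c A) (at 0)"
proof -
  have nat: "nat N > 0" "nat M \<le> nat A" "nat M \<le> nat N - nat A"
    "(nat A = nat M) = (A = M)" "(nat M = 0) = (M = 0)" "(nat N - nat A = nat M) = (N - A = M)"
    using assms(2-5) by auto
  have "((\<lambda>q. (\<Sum>k. Gfun (c * q ^ (nat A + nat N * k))) / q ^ nat M)
      \<longlongrightarrow> (if A = M then if M = 0 then Gfun c else c else 0)) (at 0)"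
  proof -
    have "(if nat A \<noteq> nat M then 0 else if nat M = 0 then Gfun c else c)
        = (if A = M then if M = 0 then Gfun c else c else 0)"
      using nat(4,5) by auto
    with Gfun_series_asymptotics[OF assms(1) nat(1,2)] show ?thesis
      by simp
  qed
  moreover have "((\<lambda>q. (\<Sum>k. Gfun (inverse c * q ^ ((nat N - nat A) + nat N * k))) / q ^ nat M)
      \<longlongrightarrow> (if N - A = M then inverse c else 0)) (at 0)"
  proof -
    have "(if nat N - nat A \<noteq> nat M then 0 else if nat M = 0 then Gfun (inverse c) else inverse c)
        = (if N - A = M then inverse c else 0)"
      using assms(5) nat(6) by auto
    with Gfun_series_asymptotics[of "inverse c", OF _ nat(1,3)] assms(1) show ?thesis
      by (simp add: norm_inverse)
  qed
  ultimately have "((\<lambda>q. (\<Sum>k. Gfun (c * q ^ (nat A + nat N * k))) / q ^ nat M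
      + (\<Sum>k. Gfun (inverse c * q ^ ((nat N - nat A) + nat N * k))) / q ^ nat M)
      \<longlongrightarrow> Gfun_sum_lead N M c A) (at 0)"
    unfolding Gfun_sum_lead_def by (rule tendsto_add)
  then show ?thesis
    by (simp add: Gfun_sum_def add_divide_distrib)
qed

lemma qpar_filterlim_at_0:
  fixes N :: int
  assumes "N > 0"
  shows "filterlim (qpar N) (at 0) (filtercomap Im at_top)"
proof -
  define C where "C = 2 * pi / real_of_int N"
  have "C > 0"
    using assms by (simp add: C_def)
  then have "filterlim (\<lambda>x. - (C * x)) at_bot at_top"
    by (simp add: filterlim_uminus_at_bot filterlim_tendsto_pos_mult_at_top[OF tendsto_const _ filterlim_ident])
  then have "((\<lambda>x. exp (- (C * x))) \<longlongrightarrow> 0) at_top"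
    by (rule filterlim_compose[OF exp_at_bot])
  then have "((\<lambda>\<tau>. exp (- (C * Im \<tau>))) \<longlongrightarrow> 0) (filtercomap Im at_top)"
    by (rule filterlim_compose[OF _ filterlim_filtercomap])
  moreover have "norm (qpar N \<tau>) = exp (- (C * Im \<tau>))" for \<tau>
  proof -
    have "Re (2 * of_real pi * \<i> * \<tau> / of_int N) = - (C * Im \<tau>)"
      by (simp add: C_def Re_divide_of_real[where r="real_of_int N", simplified])
    then show ?thesis
      by (simp add: qpar_def norm_exp_eq_Re)
  qed
  ultimately have "((\<lambda>\<tau>. norm (qpar N \<tau>)) \<longlongrightarrow> 0) (filtercomap Im at_top)"
    by simp
  then have "(qpar N \<longlongrightarrow> 0) (filtercomap Im at_top)"
    by (rule tendsto_norm_zero_cancel)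
  then show ?thesis
    by (simp add: filterlim_at)
qed

lemma brace_bounds:
  fixes N r :: int
  assumes "N > 0"
  shows "0 \<le> brace N r" and "2 * brace N r \<le> N" and "brace N r \<le> r mod N" and "brace N r \<le> N - r mod N"
    and "brace N r = 0 \<longleftrightarrow> N dvd r"
  using pos_mod_bound[OF assms, of r] pos_mod_sign[OF assms, of r]
  by (auto simp: brace_def dvd_eq_mod_eq_0)

definition Ediff_lead :: "int \<Rightarrow> int \<Rightarrow> int \<Rightarrow> int \<Rightarrow> int \<Rightarrow> int \<Rightarrow> complex" where
  "Ediff_lead N M r1 s1 r2 s2 =
     Gfun_sum_lead N M (zeta N powi s1) (r1 mod N) - Gfun_sum_lead N M (zeta N powi s2) (r2 mod N)"

lemma Efun_diff_asymptotics:
  fixes N M r1 s1 r2 s2 :: int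
  assumes "N > 0" and "\<not> (N dvd r1 \<and> N dvd s1)" and "\<not> (N dvd r2 \<and> N dvd s2)"
    and "0 \<le> M" and "M \<le> brace N r1" and "M \<le> brace N r2"
  shows "((\<lambda>\<tau>. (Efun N \<tau> r1 s1 - Efun N \<tau> r2 s2) / qpar N \<tau> ^ nat M)
           \<longlongrightarrow> Ediff_lead N M r1 s1 r2 s2) (filtercomap Im at_top)"
proof -
  let ?P = "\<lambda>s r q. Gfun_sum (nat N) (zeta N powi s) (nat (r mod N)) q"
  have "((\<lambda>q. ?P s r q / q ^ nat M) \<longlongrightarrow> Gfun_sum_lead N M (zeta N powi s) (r mod N)) (at 0)"
    if "M \<le> brace N r" for s r
    using that brace_bounds(3,4)[OF assms(1), of r] assms(1,4)
    by (intro Gfun_sum_asymptotics) auto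
  then have "((\<lambda>q. (?P s1 r1 q - ?P s2 r2 q) / q ^ nat M) \<longlongrightarrow>
      Gfun_sum_lead N M (zeta N powi s1) (r1 mod N) - Gfun_sum_lead N M (zeta N powi s2) (r2 mod N)) (at 0)"
    using assms(5,6) by (simp add: diff_divide_distrib tendsto_diff)
  then have lim: "((\<lambda>\<tau>. (?P s1 r1 (qpar N \<tau>) - ?P s2 r2 (qpar N \<tau>)) / qpar N \<tau> ^ nat M) \<longlongrightarrow>
      Gfun_sum_lead N M (zeta N powi s1) (r1 mod N) - Gfun_sum_lead N M (zeta N powi s2) (r2 mod N))
      (filtercomap Im at_top)"
    by (rule filterlim_compose[OF _ qpar_filterlim_at_0[OF assms(1)]])
  have "eventually (\<lambda>\<tau>. qpar N \<tau> \<noteq> 0 \<and> norm (qpar N \<tau>) \<le> 1/2) (filtercomap Im at_top)"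
    using filterlim_iff[THEN iffD1, OF qpar_filterlim_at_0[OF assms(1)]] eventually_small_at_0 by blast
  moreover have "eventually (\<lambda>\<tau>. Im \<tau> > 0) (filtercomap Im at_top)"
    by (auto simp: eventually_filtercomap intro: eventually_mono[OF eventually_gt_at_top[of 0]])
  ultimately have "eventually (\<lambda>\<tau>. (?P s1 r1 (qpar N \<tau>) - ?P s2 r2 (qpar N \<tau>)) / qpar N \<tau> ^ nat M =
      (Efun N \<tau> r1 s1 - Efun N \<tau> r2 s2) / qpar N \<tau> ^ nat M) (filtercomap Im at_top)"
    by eventually_elim (simp add: Efun_diff_eq_Gfun_sum assms)
  from tendsto_cong[THEN iffD1, OF this lim] show ?thesis
    by (simp only: Ediff_lead_def)
qed

section \<open>The leading coefficients\<close>

lemma zeta_powi_eq_1_iff: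
  fixes N x :: int
  assumes "N > 0"
  shows "zeta N powi x = 1 \<longleftrightarrow> N dvd x"
proof
  assume "N dvd x"
  then obtain k where "x = N * k"
    by auto
  then have "of_int x * (2 * of_real pi * \<i> / of_int N) = \<i> * (of_int k * (of_real pi * 2))"
    using assms by (simp add: field_simps)
  then show "zeta N powi x = 1"
    by (simp add: zeta_powi_eq_exp exp_2pi_1_int)
next
  assume "zeta N powi x = 1"
  then obtain n where n: "Im (of_int x * (2 * of_real pi * \<i> / of_int N)) = real_of_int (2 * n) * pi"
    unfolding zeta_powi_eq_exp exp_eq_1 by blast
  have "Im (of_int x * (2 * of_real pi * \<i> / of_int N)) = real_of_int x * (2 * pi) / real_of_int N"
    by (simp add: Im_divide_of_real[where r="real_of_int N", simplified])
  with n assms have "real_of_int x = real_of_int (N * n)"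
    by (simp add: field_simps)
  then show "N dvd x"
    by (simp only: of_int_eq_iff) simp
qed

lemma zeta_powi_eq_iff:
  fixes N a b :: int
  assumes "N > 0"
  shows "zeta N powi a = zeta N powi b \<longleftrightarrow> N dvd (a - b)"
proof -
  have "zeta N powi a = zeta N powi b \<longleftrightarrow> zeta N powi (a - b) = 1"
    by (simp add: power_int_diff divide_eq_1_iff power_int_eq_0_iff)
  then show ?thesis
    using zeta_powi_eq_1_iff[OF assms] by simp
qed

lemma inverse_zeta_powi: "inverse (zeta N powi a) = zeta N powi (- a)"
  by (simp add: power_int_minus)

lemma plus_inverse_eq_imp:
  fixes c d :: complex
  assumes "c \<noteq> 0" and "d \<noteq> 0" and "c + inverse c = d + inverse d"
  shows "c = d \<or> c * d = 1"
proof -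
  have "(c - d) * (c * d - 1) = c * d * ((c + inverse c) - (d + inverse d))"
    using assms(1,2) by (simp add: field_simps)
  then have "(c - d) * (c * d - 1) = 0"
    using assms(3) by simp
  then show ?thesis
    by auto
qed

lemma zeta_plus_inverse_eq_imp:
  fixes N a b :: int
  assumes "N > 0" and "zeta N powi a + inverse (zeta N powi a) = zeta N powi b + inverse (zeta N powi b)"
  shows "N dvd (a - b) \<or> N dvd (a + b)"
  using plus_inverse_eq_imp[OF _ _ assms(2)] zeta_powi_eq_iff[OF assms(1), of a b]
    zeta_powi_eq_1_iff[OF assms(1), of "a + b"]
  by (auto simp: power_int_add power_int_eq_0_iff)

lemma Gfun_eq_inverse: "c \<noteq> 0 \<Longrightarrow> Gfun c = inverse (c + inverse c - 2)"
  by (simp add: Gfun_def field_simps power2_eq_square)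

lemma Gfun_zeta_eq_imp:
  fixes N a b :: int
  assumes "N > 0" and "Gfun (zeta N powi a) = Gfun (zeta N powi b)"
  shows "N dvd (a - b) \<or> N dvd (a + b)"
  using assms by (intro zeta_plus_inverse_eq_imp) (simp_all add: Gfun_eq_inverse power_int_eq_0_iff)

lemma Gfun_zeta_nonzero:
  fixes N a :: int
  assumes "N > 0" and "\<not> N dvd a"
  shows "Gfun (zeta N powi a) \<noteq> 0"
  using assms zeta_powi_eq_1_iff[OF assms(1), of a] by (simp add: Gfun_def power_int_eq_0_iff)

lemma mu_brace_cong:
  fixes N r :: int
  assumes "N > 0"
  shows "N dvd (r - mu N r * brace N r)" and "mu N r = 1 \<or> mu N r = -1"
proof -
  have "r - mu N r * brace N r = r - r mod N \<or> r - mu N r * brace N r = (r - r mod N) + N"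
    using assms by (auto simp: mu_def brace_def)
  then show "N dvd (r - mu N r * brace N r)"
    by (auto simp: minus_mod_eq_mult_div)
  show "mu N r = 1 \<or> mu N r = -1"
    by (simp add: mu_def)
qed

lemma Gfun_sum_lead_zero: "N \<noteq> 0 \<Longrightarrow> Gfun_sum_lead N 0 c 0 = Gfun c"
  by (simp add: Gfun_sum_lead_def)

lemma Gfun_sum_lead_below_brace:
  fixes N M r :: int
  assumes "N > 0" and "0 \<le> M" and "M < brace N r"
  shows "Gfun_sum_lead N M c (r mod N) = 0"
  using assms brace_bounds(3,4)[OF assms(1), of r] by (simp add: Gfun_sum_lead_def)

lemma Gfun_sum_lead_brace:
  fixes N r s :: int
  assumes "N > 0" and "0 < brace N r" and "2 * brace N r < N"
  shows "Gfun_sum_lead N (brace N r) (zeta N powi s) (r mod N) = zeta N powi (mu N r * s)"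
  using assms by (auto simp: Gfun_sum_lead_def brace_def mu_def inverse_zeta_powi)

lemma Gfun_sum_lead_brace_half:
  fixes N r :: int
  assumes "N > 0" and "2 * brace N r = N"
  shows "Gfun_sum_lead N (brace N r) c (r mod N) = c + inverse c"
  using assms by (auto simp: Gfun_sum_lead_def brace_def)

lemma Gfun_zeta_uminus: "Gfun (zeta N powi (- a)) = Gfun (zeta N powi a)"
  by (metis Gfun_inverse inverse_zeta_powi)

lemma brace_half_imp:
  fixes N r :: int
  assumes "N > 0" and "2 * brace N r = N"
  shows "2 * (r mod N) = N"
  using assms by (auto simp: brace_def split: if_splits)

lemma brace_eq_imp_cong:
  fixes N r1 r2 :: int
  assumes "N > 0" and "brace N r1 = brace N r2"
  shows "N dvd (r2 - mu N r1 * mu N r2 * r1)"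
proof -
  have "mu N r1 * mu N r1 = 1"
    using mu_brace_cong(2)[OF assms(1), of r1] by auto
  then have "r2 - mu N r1 * mu N r2 * r1
      = (r2 - mu N r2 * brace N r2) - mu N r1 * mu N r2 * (r1 - mu N r1 * brace N r1)"
    using assms(2) by (simp add: algebra_simps)
  then show ?thesis
    by (simp only:) (intro dvd_diff dvd_mult mu_brace_cong(1)[OF assms(1)])
qed

lemma diff_divide_inverse_diff:
  fixes e1 e2 :: complex
  assumes "e1 \<noteq> 0" and "e2 \<noteq> 0" and "e1 \<noteq> e2"
  shows "inverse e1 - inverse e2 \<noteq> 0" and "(e1 - e2) / (inverse e1 - inverse e2) = - (e1 * e2)"
  using assms by (simp_all add: field_simps)

lemma Ediff_lead_ratio_brace_zero:
  fixes N r1 s1 r2 s2 :: int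
  assumes "N > 0" and "\<not> N dvd s1"
    and "\<not> (N dvd (r1 - r2) \<and> N dvd (s1 - s2))" and "\<not> (N dvd (r1 + r2) \<and> N dvd (s1 + s2))"
    and "N dvd r1"
  shows "Ediff_lead N 0 r1 (- s1) r2 (- s2) \<noteq> 0"
    and "Ediff_lead N 0 r1 s1 r2 s2 / Ediff_lead N 0 r1 (- s1) r2 (- s2) = 1"
proof -
  have "Ediff_lead N 0 r1 s1 r2 s2 \<noteq> 0 \<and> Ediff_lead N 0 r1 (- s1) r2 (- s2) = Ediff_lead N 0 r1 s1 r2 s2"
  proof (cases "N dvd r2")
    case True
    then have "N dvd (r1 - r2)" "N dvd (r1 + r2)"
      using assms(5) by simp_all
    then have "Gfun (zeta N powi s1) \<noteq> Gfun (zeta N powi s2)"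
      using Gfun_zeta_eq_imp[OF assms(1)] assms(3,4) by blast
    with True show ?thesis
      using assms(1,5) by (simp add: Ediff_lead_def Gfun_sum_lead_zero Gfun_zeta_uminus)
  next
    case False
    then have "0 < brace N r2"
      using brace_bounds(1,5)[OF assms(1), of r2] by linarith
    with assms(1,2,5) show ?thesis
      by (simp add: Ediff_lead_def Gfun_sum_lead_zero Gfun_sum_lead_below_brace Gfun_zeta_uminus
          Gfun_zeta_nonzero)
  qed
  then show "Ediff_lead N 0 r1 (- s1) r2 (- s2) \<noteq> 0"
    and "Ediff_lead N 0 r1 s1 r2 s2 / Ediff_lead N 0 r1 (- s1) r2 (- s2) = 1"
    by simp_all
qed

lemma Ediff_lead_ratio_brace_less:
  fixes N r1 s1 r2 s2 :: int
  assumes "N > 0" and "0 < brace N r1" and "brace N r1 < brace N r2"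
  defines "M \<equiv> brace N r1"
  shows "Ediff_lead N M r1 (- s1) r2 (- s2) \<noteq> 0"
    and "Ediff_lead N M r1 s1 r2 s2 / Ediff_lead N M r1 (- s1) r2 (- s2) = zeta N powi (2 * mu N r1 * s1)"
proof -
  have "2 * brace N r1 < N"
    using assms(3) brace_bounds(2)[OF assms(1), of r2] by linarith
  then have "Ediff_lead N M r1 s1 r2 s2 = zeta N powi (mu N r1 * s1)" for s1 s2
    using assms by (simp add: Ediff_lead_def Gfun_sum_lead_brace Gfun_sum_lead_below_brace)
  then show "Ediff_lead N M r1 (- s1) r2 (- s2) \<noteq> 0"
    and "Ediff_lead N M r1 s1 r2 s2 / Ediff_lead N M r1 (- s1) r2 (- s2) = zeta N powi (2 * mu N r1 * s1)"
    by (simp_all add: power_int_eq_0_iff power_int_minus divide_inverse power_int_add[symmetric] mult_ac)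
qed

lemma Ediff_lead_ratio_brace_half:
  fixes N r1 s1 r2 s2 :: int
  assumes "N > 0"
    and "\<not> (N dvd (r1 - r2) \<and> N dvd (s1 - s2))" and "\<not> (N dvd (r1 + r2) \<and> N dvd (s1 + s2))"
    and "brace N r1 = brace N r2" and "2 * brace N r1 = N"
  defines "M \<equiv> brace N r1"
  shows "Ediff_lead N M r1 (- s1) r2 (- s2) \<noteq> 0"
    and "Ediff_lead N M r1 s1 r2 s2 / Ediff_lead N M r1 (- s1) r2 (- s2) = 1"
proof -
  have "Gfun_sum_lead N M c (r1 mod N) = c + inverse c" for c
    unfolding M_def by (rule Gfun_sum_lead_brace_half[OF assms(1,5)])
  moreover have "Gfun_sum_lead N M c (r2 mod N) = c + inverse c" for c
    unfolding M_def assms(4) by (rule Gfun_sum_lead_brace_half[OF assms(1)]) (use assms(4,5) in simp)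
  ultimately have lead: "Ediff_lead N M r1 s1 r2 s2
      = (zeta N powi s1 + inverse (zeta N powi s1)) - (zeta N powi s2 + inverse (zeta N powi s2))" for s1 s2
    by (simp add: Ediff_lead_def)
  have "2 * (r1 mod N) = N" "2 * (r2 mod N) = N"
    using brace_half_imp[OF assms(1)] assms(4,5) by simp_all
  then have "N dvd (r1 - r2)"
    by (simp add: mod_eq_dvd_iff[symmetric])
  have "r1 mod N + r2 mod N = N"
    using \<open>2 * (r1 mod N) = N\<close> \<open>2 * (r2 mod N) = N\<close> by linarith
  then have "N dvd (r1 + r2)"
    by (metis dvd_eq_mod_eq_0 mod_add_eq mod_self)
  with \<open>N dvd (r1 - r2)\<close> have "Ediff_lead N M r1 s1 r2 s2 \<noteq> 0"
    using lead zeta_plus_inverse_eq_imp[OF assms(1), of s1 s2] assms(2,3) by auto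
  moreover have "Ediff_lead N M r1 (- s1) r2 (- s2) = Ediff_lead N M r1 s1 r2 s2"
    by (simp add: lead inverse_zeta_powi)
  ultimately show "Ediff_lead N M r1 (- s1) r2 (- s2) \<noteq> 0"
    and "Ediff_lead N M r1 s1 r2 s2 / Ediff_lead N M r1 (- s1) r2 (- s2) = 1"
    by simp_all
qed

lemma zeta_mu_brace_neq:
  fixes N r1 s1 r2 s2 :: int
  assumes "N > 0"
    and "\<not> (N dvd (r1 - r2) \<and> N dvd (s1 - s2))" and "\<not> (N dvd (r1 + r2) \<and> N dvd (s1 + s2))"
    and "brace N r1 = brace N r2"
  shows "zeta N powi (mu N r1 * s1) \<noteq> zeta N powi (mu N r2 * s2)"
proof
  assume "zeta N powi (mu N r1 * s1) = zeta N powi (mu N r2 * s2)"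
  then have "N dvd (mu N r1 * s1 - mu N r2 * s2)"
    using zeta_powi_eq_iff[OF assms(1)] by simp
  define \<epsilon> where "\<epsilon> = mu N r1 * mu N r2"
  have "s2 - \<epsilon> * s1 = - mu N r2 * (mu N r1 * s1 - mu N r2 * s2)"
    using mu_brace_cong(2)[OF assms(1), of r2] by (auto simp: \<epsilon>_def algebra_simps)
  with \<open>N dvd (mu N r1 * s1 - mu N r2 * s2)\<close> have s: "N dvd (s2 - \<epsilon> * s1)"
    by simp
  have r: "N dvd (r2 - \<epsilon> * r1)"
    using brace_eq_imp_cong[OF assms(1,4)] by (simp add: \<epsilon>_def)
  consider "\<epsilon> = 1" | "\<epsilon> = -1"
    using mu_brace_cong(2)[OF assms(1), of r1] mu_brace_cong(2)[OF assms(1), of r2]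
    by (auto simp: \<epsilon>_def)
  then show False
  proof cases
    case 1
    with r s assms(2) show False
      by (simp add: dvd_diff_commute)
  next
    case 2
    with r s assms(3) show False
      by (simp add: add.commute)
  qed
qed

lemma Ediff_lead_ratio_brace_eq:
  fixes N r1 s1 r2 s2 :: int
  assumes "N > 0"
    and "\<not> (N dvd (r1 - r2) \<and> N dvd (s1 - s2))" and "\<not> (N dvd (r1 + r2) \<and> N dvd (s1 + s2))"
    and "brace N r1 = brace N r2" and "0 < brace N r1" and "2 * brace N r1 < N"
  defines "M \<equiv> brace N r1"
  shows "Ediff_lead N M r1 (- s1) r2 (- s2) \<noteq> 0"
    and "Ediff_lead N M r1 s1 r2 s2 / Ediff_lead N M r1 (- s1) r2 (- s2)
      = - (zeta N powi (mu N r1 * s1 + mu N r2 * s2))"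
proof -
  define e1 where "e1 = zeta N powi (mu N r1 * s1)"
  define e2 where "e2 = zeta N powi (mu N r2 * s2)"
  have "Gfun_sum_lead N M (zeta N powi s) (r1 mod N) = zeta N powi (mu N r1 * s)" for s
    unfolding M_def by (rule Gfun_sum_lead_brace[OF assms(1,5,6)])
  moreover have "Gfun_sum_lead N M (zeta N powi s) (r2 mod N) = zeta N powi (mu N r2 * s)" for s
    unfolding M_def assms(4) by (rule Gfun_sum_lead_brace[OF assms(1)]) (use assms(4-6) in simp_all)
  ultimately have "Ediff_lead N M r1 s1 r2 s2 = e1 - e2"
    and "Ediff_lead N M r1 (- s1) r2 (- s2) = inverse e1 - inverse e2"
    by (simp_all add: e1_def e2_def Ediff_lead_def inverse_zeta_powi)
  moreover have "e1 \<noteq> e2"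
    unfolding e1_def e2_def by (rule zeta_mu_brace_neq[OF assms(1-4)])
  moreover have "e1 \<noteq> 0" "e2 \<noteq> 0"
    by (simp_all add: e1_def e2_def power_int_eq_0_iff)
  ultimately show "Ediff_lead N M r1 (- s1) r2 (- s2) \<noteq> 0"
    and "Ediff_lead N M r1 s1 r2 s2 / Ediff_lead N M r1 (- s1) r2 (- s2)
      = - (zeta N powi (mu N r1 * s1 + mu N r2 * s2))"
    using diff_divide_inverse_diff[of e1 e2] by (simp_all add: e1_def e2_def power_int_add)
qed

lemma Ediff_lead_ratio:
  fixes N r1 s1 r2 s2 :: int
  assumes "N > 0"
    and "\<not> (N dvd r1 \<and> N dvd s1)"
    and "\<not> (N dvd (r1 - r2) \<and> N dvd (s1 - s2))"
    and "\<not> (N dvd (r1 + r2) \<and> N dvd (s1 + s2))"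
    and "brace N r2 \<ge> brace N r1"
  defines "M \<equiv> brace N r1"
  shows "Ediff_lead N M r1 (- s1) r2 (- s2) \<noteq> 0 \<and>
    Ediff_lead N M r1 s1 r2 s2 / Ediff_lead N M r1 (- s1) r2 (- s2) =
     (if brace N r2 = brace N r1 \<and> brace N r1 \<noteq> 0 \<and> 2 * brace N r1 \<noteq> N
      then - (zeta N powi (mu N r1 * s1 + mu N r2 * s2))
      else if brace N r2 > brace N r1 \<and> brace N r1 \<noteq> 0
      then zeta N powi (2 * mu N r1 * s1)
      else 1)"
proof -
  consider (zero) "brace N r1 = 0"
    | (less) "0 < brace N r1" "brace N r1 < brace N r2"
    | (half) "brace N r1 = brace N r2" "2 * brace N r1 = N"
    | (equal) "brace N r1 = brace N r2" "0 < brace N r1" "2 * brace N r1 < N"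
    using brace_bounds(1,2)[OF assms(1), of r1] assms(5) by linarith
  then show ?thesis
  proof cases
    case zero
    then have "N dvd r1" "\<not> N dvd s1"
      using brace_bounds(5)[OF assms(1)] assms(2) by auto
    with Ediff_lead_ratio_brace_zero[OF assms(1) _ assms(3,4)] zero show ?thesis
      by (simp add: M_def)
  next
    case less
    with Ediff_lead_ratio_brace_less[OF assms(1) less] show ?thesis
      by (simp add: M_def)
  next
    case half
    with Ediff_lead_ratio_brace_half[OF assms(1,3,4) half] show ?thesis
      by (simp add: M_def)
  next
    case equal
    with Ediff_lead_ratio_brace_eq[OF assms(1,3,4) equal] show ?thesis
      by (simp add: M_def)
  qed
qed

lemma Wfun_tendsto:
  fixes N M r1 s1 r2 s2 :: int
  assumes "N > 0" and "\<not> (N dvd r1 \<and> N dvd s1)" and "\<not> (N dvd r2 \<and> N dvd s2)"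
    and "0 \<le> M" and "M \<le> brace N r1" and "M \<le> brace N r2"
    and "Ediff_lead N M r1 (- s1) r2 (- s2) \<noteq> 0"
  shows "((\<lambda>\<tau>. Wfun N \<tau> r1 s1 r2 s2) \<longlongrightarrow>
      Ediff_lead N M r1 s1 r2 s2 / Ediff_lead N M r1 (- s1) r2 (- s2)) (filtercomap Im at_top)"
proof -
  have num: "((\<lambda>\<tau>. (Efun N \<tau> r1 s1 - Efun N \<tau> r2 s2) / qpar N \<tau> ^ nat M)
      \<longlongrightarrow> Ediff_lead N M r1 s1 r2 s2) (filtercomap Im at_top)"
    by (rule Efun_diff_asymptotics[OF assms(1-6)])
  have den: "((\<lambda>\<tau>. (Efun N \<tau> r1 (- s1) - Efun N \<tau> r2 (- s2)) / qpar N \<tau> ^ nat M)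
      \<longlongrightarrow> Ediff_lead N M r1 (- s1) r2 (- s2)) (filtercomap Im at_top)"
    using assms(2,3) by (intro Efun_diff_asymptotics[OF assms(1) _ _ assms(4-6)]) simp_all
  have "(A / x) / (B / x) = A / B" if "x \<noteq> 0" for A B x :: complex
    using that by (cases "B = 0") simp_all
  then have "Wfun N \<tau> r1 s1 r2 s2 = ((Efun N \<tau> r1 s1 - Efun N \<tau> r2 s2) / qpar N \<tau> ^ nat M)
      / ((Efun N \<tau> r1 (- s1) - Efun N \<tau> r2 (- s2)) / qpar N \<tau> ^ nat M)" for \<tau>
    by (simp add: Wfun_def)
  with tendsto_divide[OF num den assms(7)] show ?thesis
    by simp
qed

theorem lemma3p3:
  fixes N r1 s1 r2 s2 :: int
  assumes "N > 2"
    and "\<not> (N dvd r1 \<and> N dvd s1)"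
    and "\<not> (N dvd r2 \<and> N dvd s2)"
    and "\<not> (N dvd (r1 - r2) \<and> N dvd (s1 - s2))"
    and "\<not> (N dvd (r1 + r2) \<and> N dvd (s1 + s2))"
    and "brace N r2 \<ge> brace N r1"
  shows "leading_coeff_q N (\<lambda>tau. Wfun N tau r1 s1 r2 s2)
     (if brace N r2 = brace N r1 \<and> brace N r1 \<noteq> 0 \<and> 2 * brace N r1 \<noteq> N
      then - (zeta N powi (mu N r1 * s1 + mu N r2 * s2))
      else if brace N r2 > brace N r1 \<and> brace N r1 \<noteq> 0
      then zeta N powi (2 * mu N r1 * s1)
      else 1)"
    (is "leading_coeff_q N _ ?c")
proof -
  have N: "N > 0"
    using assms(1) by simp
  note ratio = Ediff_lead_ratio[OF N assms(2,4-6)]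
  have "((\<lambda>\<tau>. Wfun N \<tau> r1 s1 r2 s2) \<longlongrightarrow> ?c) (filtercomap Im at_top)"
    using Wfun_tendsto[OF N assms(2,3) brace_bounds(1)[OF N] order_refl assms(6)] ratio by simp
  moreover have "?c \<noteq> 0"
    by (simp add: power_int_eq_0_iff)
  ultimately show ?thesis
    unfolding leading_coeff_q_def by (intro conjI exI[of _ 0]) simp_all
qed

end
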